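(* Let $0<\alpha<1$, $\beta\in\mathbb{R}$, and for $x>0$ let ${}^C D_x^\alpha f(x)=\frac{1}{\Gamma(1-\alpha)}\int_0^x (x-t)^{-\alpha}f'(t)\,dt$ denote the Caputo fractional derivative. Then for $x>0$, $${}^C D_x^{\alpha}\big[\tanh(\beta x)\big]=\sum_{l=0}^{\infty}C_\alpha^l\,\frac{d^l}{dx^l}\!\left(\frac{1}{\cosh(\beta x)}\right)\frac{\beta\,x^{1-\alpha+l}}{\Gamma(2+l-\alpha)}\;{}_1F_2\!\left(1;\frac{2+l-\alpha}{2},\frac{3+l-\alpha}{2};\frac{\beta^2x^2}{4}\right),$$ where $C_\alpha^l=\frac{\Gamma(\alpha+1)}{\Gamma(l+1)\Gamma(\alpha-l+1)}$ is the generalized binomial coefficient.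
   Context: ${}_1F_2(a;b_1,b_2;z)=\sum_{k\ge0}\frac{(a)_k}{(b_1)_k(b_2)_k}\frac{z^k}{k!}$, with $(a)_k$ the Pochhammer symbol. *)

theory Defs
  imports "HOL-Analysis.Analysis"
begin

definition hyp1F2 :: "real \<Rightarrow> real \<Rightarrow> real \<Rightarrow> real \<Rightarrow> real" where
  "hyp1F2 a b1 b2 z =
     (\<Sum>k. pochhammer a k / (pochhammer b1 k * pochhammer b2 k) * z ^ k / fact k)"

definition caputo :: "real \<Rightarrow> (real \<Rightarrow> real) \<Rightarrow> real \<Rightarrow> real" where
  "caputo \<alpha> f x = (1 / Gamma (1 - \<alpha>)) *
     integral {0..x} (\<lambda>t. (x - t) powr (-\<alpha>) * deriv f t)"

definition gen_binom :: "real \<Rightarrow> nat \<Rightarrow> real" where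
  "gen_binom \<alpha> l = Gamma (\<alpha> + 1) / (Gamma (real l + 1) * Gamma (\<alpha> - real l + 1))"

end

theory Submission
  imports Defs "HOL-Complex_Analysis.Complex_Analysis"
begin

text \<open>Write \<open>tanh (\<beta> t) = sinh (\<beta> t) * sech (\<beta> t)\<close> and expand \<open>sech (\<beta> t)\<close> in its Taylor
  series \<open>\<Sum>a\<^sub>m (t - x)\<^sup>m\<close> about \<open>t = x\<close>. The poles of \<open>sech (\<beta> z)\<close> lie on the imaginary
  axis at height at least \<open>\<pi> / (2 |\<beta>|)\<close>, so the disc of convergence contains \<open>[0, x]\<close>.
  Differentiating termwise, the \<open>m\<close>-th term of the Caputo integrand is \<open>(x - t)\<^sup>-\<^sup>\<alpha>\<close> times the
  derivative of \<open>sinh (\<beta> t) (t - x)\<^sup>m\<close>; integration by parts turns its integral into a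
  multiple of \<open>\<integral>\<^sub>0\<^sup>x (x - t)\<^sup>m\<^sup>-\<^sup>\<alpha> cosh (\<beta> t) dt\<close>, and expanding \<open>cosh\<close> into Beta integrals
  identifies that as a \<open>\<^sub>1F\<^sub>2\<close> value. Dominated convergence justifies the termwise
  integration, and the reflection formula for \<open>Gamma\<close> converts the resulting coefficient
  \<open>(-1)\<^sup>m \<alpha> / ((\<alpha> - m) (m + 1 - \<alpha>) Gamma (1 - \<alpha>))\<close> into \<open>C\<^sub>\<alpha>\<^sup>m m! / Gamma (m + 2 - \<alpha>)\<close>.\<close>

lemma cosh_of_real: "cosh (complex_of_real r) = complex_of_real (cosh r)"
  by (simp add: cosh_field_def flip: exp_of_real)

lemma cosh_complex_eq_0D:
  fixes w :: complex
  assumes "cosh w = 0"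
  shows "Re w = 0" and "pi / 2 \<le> \<bar>Im w\<bar>"
proof -
  from assms have "cos (\<i> * w) = 0" by (simp add: cosh_conv_cos)
  then obtain n :: int where n: "\<i> * w = of_real (n * pi) + of_real pi / 2"
    by (auto simp: cos_eq_0)
  then have w: "w = - \<i> * (of_real (n * pi) + of_real pi / 2)"
    by (metis i_squared minus_minus mult.assoc mult_1 mult_minus_left)
  then show "Re w = 0" by simp
  have "pi / 2 \<le> \<bar>n * pi + pi / 2\<bar>"
  proof (cases "n \<ge> 0")
    case False
    then have "real_of_int n * pi \<le> -1 * pi"
      by (intro mult_right_mono) auto
    then show ?thesis by linarith
  qed simp
  moreover have "Im w = - (n * pi + pi / 2)" using w by simp
  ultimately show "pi / 2 \<le> \<bar>Im w\<bar>" by (metis abs_minus_cancel)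
qed

lemma abs_sinh_le_cosh_real: "\<bar>sinh (y :: real)\<bar> \<le> cosh y"
  using sinh_le_cosh_real[of y] sinh_le_cosh_real[of "- y"] by simp

lemma cosh_real_le_if_abs_le:
  fixes y z :: real
  assumes "\<bar>y\<bar> \<le> \<bar>z\<bar>"
  shows "cosh y \<le> cosh z"
  using cosh_real_nonneg_le_iff[of "\<bar>y\<bar>" "\<bar>z\<bar>"] assms by simp

lemma powr_neg_mult_power_minus:
  fixes y \<alpha> :: real
  assumes "0 < y"
  shows "y powr (- \<alpha>) * (- y) ^ n = (-1) ^ n * y powr (real n - \<alpha>)"
proof -
  have "y powr (real n - \<alpha>) = y ^ n * y powr (- \<alpha>)"
    unfolding diff_conv_add_uminus powr_add powr_realpow[OF assms] ..
  then show ?thesis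
    unfolding power_minus[of y n] by (simp only: mult_ac)
qed

lemma not_Ints_add_Ints:
  fixes \<alpha> r :: real
  assumes "\<alpha> \<notin> \<int>" and "r \<in> \<int>"
  shows "\<alpha> + r \<notin> \<int>" and "r - \<alpha> \<notin> \<int>"
proof -
  show "\<alpha> + r \<notin> \<int>"
    using assms Ints_diff[of "\<alpha> + r" r] by auto
  show "r - \<alpha> \<notin> \<int>"
    using assms Ints_diff[of r "r - \<alpha>"] by auto
qed

lemma Gamma_plus1_not_Ints:
  fixes z :: real
  assumes "z \<notin> \<int>"
  shows "Gamma (z + 1) = z * Gamma z"
  using assms nonpos_Ints_Int by (intro Gamma_plus1) blast

lemma Gamma_mult_Gamma_shift:
  fixes \<alpha> :: real
  assumes "\<alpha> \<notin> \<int>"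
  shows "Gamma (\<alpha> - m) * Gamma (1 - \<alpha> + m) = (-1) ^ m * (Gamma \<alpha> * Gamma (1 - \<alpha>))"
proof (induction m)
  case (Suc m)
  have "\<alpha> + - real (Suc m) \<notin> \<int>" "real (Suc m) - \<alpha> \<notin> \<int>"
    using not_Ints_add_Ints[OF assms, of "- Suc m"] not_Ints_add_Ints[OF assms, of "Suc m"] by auto
  moreover have "\<alpha> + - real (Suc m) + 1 = \<alpha> - m" "\<alpha> + - real (Suc m) = \<alpha> - Suc m"
    "real (Suc m) - \<alpha> + 1 = 1 - \<alpha> + Suc m" "real (Suc m) - \<alpha> = 1 - \<alpha> + m"
    by simp_all
  ultimately have down: "Gamma (\<alpha> - m) = (\<alpha> - Suc m) * Gamma (\<alpha> - Suc m)"
    and up: "Gamma (1 - \<alpha> + Suc m) = (1 - \<alpha> + m) * Gamma (1 - \<alpha> + m)"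
    using Gamma_plus1_not_Ints by metis+
  have "Gamma (\<alpha> - Suc m) * Gamma (1 - \<alpha> + Suc m)
      = - ((\<alpha> - Suc m) * Gamma (\<alpha> - Suc m)) * Gamma (1 - \<alpha> + m)"
    unfolding up by (simp add: algebra_simps)
  also have "\<dots> = - (Gamma (\<alpha> - m) * Gamma (1 - \<alpha> + m))"
    unfolding down by simp
  finally show ?case
    using Suc.IH by simp
qed simp

lemma gen_binom_mult_fact_div_Gamma:
  fixes \<alpha> :: real
  assumes \<alpha>: "\<alpha> \<notin> \<int>"
  shows "gen_binom \<alpha> m * fact m / Gamma (2 + real m - \<alpha>)
       = (-1) ^ m * \<alpha> / ((\<alpha> - m) * (real m + 1 - \<alpha>) * Gamma (1 - \<alpha>))"
proof -
  have "\<alpha> - m \<notin> \<int>" "1 - \<alpha> + m \<notin> \<int>" "1 - \<alpha> \<notin> \<int>"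
    using not_Ints_add_Ints[OF \<alpha>, of "- m"] not_Ints_add_Ints[OF \<alpha>, of "1 + m"] not_Ints_add_Ints[OF \<alpha>, of 1]
    by (simp_all add: add.commute)
  have "Gamma (\<alpha> - m + 1) = (\<alpha> - m) * Gamma (\<alpha> - m)"
    using Gamma_plus1_not_Ints[OF \<open>\<alpha> - m \<notin> \<int>\<close>] .
  moreover have "Gamma (\<alpha> + 1) = \<alpha> * Gamma \<alpha>"
    using Gamma_plus1_not_Ints[OF \<alpha>] .
  moreover have "Gamma (real m + 1) = fact m"
    using Gamma_fact[of m, where 'a = real] by (simp add: add.commute)
  ultimately have binom: "gen_binom \<alpha> m * fact m = \<alpha> * Gamma \<alpha> / ((\<alpha> - m) * Gamma (\<alpha> - m))"
    unfolding gen_binom_def by simp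
  have "1 - \<alpha> + m + 1 = 2 + real m - \<alpha>" "1 - \<alpha> + m = real m + 1 - \<alpha>"
    by simp_all
  then have "Gamma (2 + real m - \<alpha>) = (real m + 1 - \<alpha>) * Gamma (1 - \<alpha> + m)"
    using Gamma_plus1_not_Ints[OF \<open>1 - \<alpha> + m \<notin> \<int>\<close>] by metis
  then have "gen_binom \<alpha> m * fact m / Gamma (2 + real m - \<alpha>)
      = \<alpha> * Gamma \<alpha> / ((\<alpha> - m) * (real m + 1 - \<alpha>) * (Gamma (\<alpha> - m) * Gamma (1 - \<alpha> + m)))"
    unfolding binom by (simp add: mult_ac)
  also have "\<dots> = \<alpha> * Gamma \<alpha> / ((\<alpha> - m) * (real m + 1 - \<alpha>) * ((-1) ^ m * (Gamma \<alpha> * Gamma (1 - \<alpha>))))"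
    unfolding Gamma_mult_Gamma_shift[OF \<alpha>] ..
  also have "\<dots> = (-1) ^ m * \<alpha> / ((\<alpha> - m) * (real m + 1 - \<alpha>) * Gamma (1 - \<alpha>))"
  proof -
    have "Gamma \<alpha> \<noteq> 0"
      using \<alpha> nonpos_Ints_Int by (auto simp: Gamma_eq_zero_iff)
    moreover have "(-1::real) ^ m * (-1) ^ m = 1"
      by (simp flip: power_add)
    ultimately show ?thesis
      by (simp add: divide_simps)
  qed
  finally show ?thesis .
qed

lemma deriv_of_real_restriction:
  fixes G :: "complex \<Rightarrow> complex" and g :: "real \<Rightarrow> real"
  assumes "G holomorphic_on A" "open A" "\<And>y. complex_of_real y \<in> A"
    and "\<And>y. complex_of_real (g y) = G (of_real y)"
  shows "complex_of_real (deriv g y) = deriv G (of_real y)"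
proof -
  have "(G has_field_derivative deriv G (of_real y)) (at (of_real y))"
    using holomorphic_derivI[OF assms(1-3)] .
  then have v: "((\<lambda>t. complex_of_real (g t)) has_vector_derivative deriv G (of_real y)) (at y)"
    using has_vector_derivative_real_field assms(4) by fastforce
  have "(g has_real_derivative Re (deriv G (of_real y))) (at y)"
    using bounded_linear.has_vector_derivative[OF bounded_linear_Re v]
    by (simp add: has_real_derivative_iff_has_vector_derivative)
  moreover have "Im (deriv G (of_real y)) = 0"
    using bounded_linear.has_vector_derivative[OF bounded_linear_Im v]
          vector_derivative_unique_at[of "\<lambda>_. 0::real"] by force
  ultimately show ?thesis by (simp add: DERIV_imp_deriv complex_eq_iff)
qed

lemma higher_deriv_of_real_restriction:
  fixes G :: "complex \<Rightarrow> complex" and g :: "real \<Rightarrow> real"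
  assumes "G holomorphic_on A" "open A" "\<And>y. complex_of_real y \<in> A"
    and "\<And>y. complex_of_real (g y) = G (of_real y)"
  shows "complex_of_real ((deriv ^^ n) g y) = (deriv ^^ n) G (of_real y)"
proof (induction n arbitrary: y)
  case (Suc n)
  show ?case
    using deriv_of_real_restriction[OF holomorphic_higher_deriv[OF assms(1,2)] assms(2,3) Suc.IH]
    by simp
qed (use assms(4) in simp)

lemma real_taylor_series_of_holomorphic:
  fixes G :: "complex \<Rightarrow> complex" and g :: "real \<Rightarrow> real"
  assumes hol: "G holomorphic_on A" and A: "open A" "\<And>y. complex_of_real y \<in> A"
    and g: "\<And>y. complex_of_real (g y) = G (of_real y)"
    and ball: "ball (complex_of_real x) R \<subseteq> A" and t: "\<bar>t - x\<bar> < R"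
  shows "(\<lambda>n. (deriv ^^ n) g x / fact n * (t - x) ^ n) sums g t"
    and "summable (\<lambda>n. \<bar>(deriv ^^ n) g x / fact n\<bar> * \<bar>t - x\<bar> ^ n)"
proof -
  have holb: "G holomorphic_on ball (complex_of_real x) R"
    using holomorphic_on_subset[OF hol ball] .
  have coeff: "(deriv ^^ n) G (of_real x) / fact n = of_real ((deriv ^^ n) g x / fact n)" for n
    using higher_deriv_of_real_restriction[OF hol A g] by simp
  have series: "(\<lambda>n. (deriv ^^ n) g x / fact n * (u - x) ^ n) sums g u"
    if "\<bar>u - x\<bar> < R" for u
  proof -
    have "(\<lambda>n. complex_of_real ((deriv ^^ n) g x / fact n * (u - x) ^ n)) sums of_real (g u)"
      using holomorphic_power_series[OF holb, of "of_real u"] that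
      by (simp add: coeff g dist_norm flip: of_real_diff)
    then show ?thesis by (simp only: sums_of_real_iff)
  qed
  show "(\<lambda>n. (deriv ^^ n) g x / fact n * (t - x) ^ n) sums g t"
    using series[OF t] .
  define r where "r = (\<bar>t - x\<bar> + R) / 2"
  have "summable (\<lambda>n. (deriv ^^ n) g x / fact n * r ^ n)"
    using sums_summable[OF series[of "x + r"]] t unfolding r_def by simp
  from powser_insidea[OF this, of "\<bar>t - x\<bar>"] t
  show "summable (\<lambda>n. \<bar>(deriv ^^ n) g x / fact n\<bar> * \<bar>t - x\<bar> ^ n)"
    unfolding r_def by (simp add: abs_mult power_abs)
qed

lemma cosh_of_real_mult_nonzero_ball:
  fixes \<beta> x :: real
  assumes "\<beta> \<noteq> 0"
  shows "ball (complex_of_real x) (sqrt (x\<^sup>2 + (pi / (2 * \<bar>\<beta>\<bar>))\<^sup>2))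
           \<subseteq> {z. cosh (of_real \<beta> * z) \<noteq> 0}"
proof
  fix z assume z: "z \<in> ball (complex_of_real x) (sqrt (x\<^sup>2 + (pi / (2 * \<bar>\<beta>\<bar>))\<^sup>2))"
  show "z \<in> {z. cosh (of_real \<beta> * z) \<noteq> 0}"
  proof (rule ccontr)
    assume "z \<notin> {z. cosh (of_real \<beta> * z) \<noteq> 0}"
    then have zero: "cosh (of_real \<beta> * z) = 0" by simp
    have "Re z = 0" using cosh_complex_eq_0D(1)[OF zero] assms by simp
    have "pi / 2 \<le> \<bar>\<beta>\<bar> * \<bar>Im z\<bar>" using cosh_complex_eq_0D(2)[OF zero] by (simp add: abs_mult)
    then have "pi / (2 * \<bar>\<beta>\<bar>) \<le> \<bar>Im z\<bar>" using assms by (simp add: field_simps)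
    then have "(pi / (2 * \<bar>\<beta>\<bar>))\<^sup>2 \<le> (Im z)\<^sup>2"
      by (metis power2_abs power_mono pi_ge_zero abs_ge_zero divide_nonneg_nonneg mult_nonneg_nonneg zero_le_numeral)
    then have "sqrt (x\<^sup>2 + (pi / (2 * \<bar>\<beta>\<bar>))\<^sup>2) \<le> dist (complex_of_real x) z"
      using \<open>Re z = 0\<close> by (simp add: dist_norm cmod_def power2_eq_square)
    then show False using z by simp
  qed
qed

lemma sech_taylor_series:
  fixes \<beta> x t :: real
  assumes \<beta>: "\<beta> \<noteq> 0" and t: "\<bar>t - x\<bar> \<le> \<bar>x\<bar>"
  defines "s \<equiv> \<lambda>y. 1 / cosh (\<beta> * y)"
  defines "a \<equiv> \<lambda>n. (deriv ^^ n) s x / fact n"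
  shows "(\<lambda>n. a n * (t - x) ^ n) sums s t"
    and "(\<lambda>n. a n * (n * (t - x) ^ (n - 1))) sums deriv s t"
    and "summable (\<lambda>n. \<bar>a n\<bar> * \<bar>t - x\<bar> ^ n)"
    and "summable (\<lambda>n. \<bar>a n\<bar> * (n * \<bar>t - x\<bar> ^ (n - 1)))"
proof -
  define S where "S z = 1 / cosh (complex_of_real \<beta> * z)" for z
  define \<Omega> where "\<Omega> = {z. cosh (complex_of_real \<beta> * z) \<noteq> 0}"
  have \<Omega>: "open \<Omega>"
    unfolding \<Omega>_def by (intro open_Collect_neq continuous_intros)
  have hol: "S holomorphic_on \<Omega>"
    unfolding S_def \<Omega>_def cosh_field_def by (intro holomorphic_intros) auto
  have real: "complex_of_real y \<in> \<Omega>" for y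
    unfolding \<Omega>_def by (simp add: cosh_of_real flip: of_real_mult)
  have restr: "complex_of_real (s y) = S (of_real y)" for y
    unfolding s_def S_def by (simp add: cosh_of_real flip: of_real_mult)
  have ball: "ball (complex_of_real x) (sqrt (x\<^sup>2 + (pi / (2 * \<bar>\<beta>\<bar>))\<^sup>2)) \<subseteq> \<Omega>"
    unfolding \<Omega>_def using cosh_of_real_mult_nonzero_ball[OF \<beta>] .
  have "sqrt (x\<^sup>2) < sqrt (x\<^sup>2 + (pi / (2 * \<bar>\<beta>\<bar>))\<^sup>2)"
    using \<beta> by (intro real_sqrt_less_mono) simp
  then have tR: "\<bar>t - x\<bar> < sqrt (x\<^sup>2 + (pi / (2 * \<bar>\<beta>\<bar>))\<^sup>2)"
    using t by simp
  note taylor = real_taylor_series_of_holomorphic[OF hol \<Omega> real restr ball tR]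
  show "(\<lambda>n. a n * (t - x) ^ n) sums s t" "summable (\<lambda>n. \<bar>a n\<bar> * \<bar>t - x\<bar> ^ n)"
    using taylor unfolding a_def by simp_all
  have coeff: "(deriv ^^ n) (deriv s) x / fact n = a (Suc n) * Suc n" for n
  proof -
    have "(deriv ^^ n) (deriv s) = (deriv ^^ Suc n) s"
      by (metis funpow_Suc_right comp_apply)
    then show ?thesis
      unfolding a_def by simp
  qed
  note dtaylor = real_taylor_series_of_holomorphic[OF holomorphic_deriv[OF hol \<Omega>] \<Omega> real
      deriv_of_real_restriction[OF hol \<Omega> real restr] ball tR]
  have "(\<lambda>n. a (Suc n) * (Suc n * (t - x) ^ (Suc n - 1))) sums deriv s t"
    using dtaylor(1) unfolding coeff by (simp add: mult.assoc)
  then show "(\<lambda>n. a n * (n * (t - x) ^ (n - 1))) sums deriv s t"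
    using sums_Suc_iff[of "\<lambda>n. a n * (n * (t - x) ^ (n - 1))" "deriv s t"] by simp
  have "summable (\<lambda>n. \<bar>a (Suc n)\<bar> * (Suc n * \<bar>t - x\<bar> ^ (Suc n - 1)))"
    using dtaylor(2) unfolding coeff by (simp add: abs_mult mult.assoc)
  then show "summable (\<lambda>n. \<bar>a n\<bar> * (n * \<bar>t - x\<bar> ^ (n - 1)))"
    using summable_Suc_iff[of "\<lambda>n. \<bar>a n\<bar> * (n * \<bar>t - x\<bar> ^ (n - 1))"] by simp
qed

lemma deriv_tanh_mult:
  fixes \<beta> t :: real
  shows "deriv (\<lambda>y. tanh (\<beta> * y)) t
       = \<beta> * cosh (\<beta> * t) * (1 / cosh (\<beta> * t)) + sinh (\<beta> * t) * deriv (\<lambda>y. 1 / cosh (\<beta> * y)) t"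
proof -
  have sech: "((\<lambda>y. 1 / cosh (\<beta> * y)) has_real_derivative - (sinh (\<beta> * t) * \<beta>) / (cosh (\<beta> * t))\<^sup>2) (at t)"
    by (auto intro!: derivative_eq_intros simp: power2_eq_square)
  have "((\<lambda>y. sinh (\<beta> * y)) has_real_derivative cosh (\<beta> * t) * \<beta>) (at t)"
    by (auto intro!: derivative_eq_intros)
  from DERIV_mult[OF this sech] show ?thesis
    using DERIV_imp_deriv[OF sech] by (simp add: DERIV_imp_deriv tanh_def divide_inverse mult_ac)
qed

lemma has_integral_powr_diff_mult_power:
  fixes \<mu> x :: real
  assumes mu: "0 < \<mu>" and x: "0 < x"
  shows "((\<lambda>t. (x - t) powr (\<mu> - 1) * t ^ n) has_integral
           x powr (\<mu> + n) * (fact n * Gamma \<mu> / Gamma (\<mu> + n + 1))) {0..x}"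
proof -
  have "((\<lambda>u. u powr (real n + 1 - 1) * (1 - u) powr (\<mu> - 1)) has_integral Beta (n + 1) \<mu>) (cbox 0 1)"
    using has_integral_Beta_real[of "n + 1" \<mu>] mu by simp
  from has_integral_affinity'[OF this, of "1 / x" 0] x
  have "((\<lambda>t. (t / x) powr n * (1 - t / x) powr (\<mu> - 1)) has_integral x * Beta (n + 1) \<mu>) {0..x}"
    by (simp add: cbox_interval divide_inverse mult.commute)
  from has_integral_mult_right[OF this, of "x powr (n + \<mu> - 1)"]
  have scaled: "((\<lambda>t. x powr (n + \<mu> - 1) * ((t / x) powr n * (1 - t / x) powr (\<mu> - 1)))
      has_integral x powr (n + \<mu> - 1) * x * Beta (n + 1) \<mu>) {0..x}"
    by (simp add: mult.assoc)
  have "x powr (n + \<mu> - 1) * x = x powr (\<mu> + n)"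
    using x powr_add[of x "n + \<mu> - 1" 1] by (simp add: add.commute)
  moreover have "Beta (n + 1) \<mu> = fact n * Gamma \<mu> / Gamma (\<mu> + n + 1)"
    unfolding Beta_def using Gamma_fact[of n, where 'a = real] by (simp add: add_ac)
  ultimately have I: "((\<lambda>t. x powr (n + \<mu> - 1) * ((t / x) powr n * (1 - t / x) powr (\<mu> - 1)))
      has_integral x powr (\<mu> + n) * (fact n * Gamma \<mu> / Gamma (\<mu> + n + 1))) {0..x}"
    using scaled by simp
  show ?thesis
  proof (rule has_integral_spike_finite[of "{0}", OF _ _ I])
    fix t assume "t \<in> {0..x} - {0}"
    then have "0 < t" "t \<le> x" by auto
    moreover have "1 - t / x = (x - t) / x" using x by (simp add: field_simps)
    ultimately have "(t / x) powr n = t ^ n / x powr n" "(1 - t / x) powr (\<mu> - 1) = (x - t) powr (\<mu> - 1) / x powr (\<mu> - 1)"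
      using x by (simp_all add: powr_divide powr_realpow)
    then show "(x - t) powr (\<mu> - 1) * t ^ n = x powr (n + \<mu> - 1) * ((t / x) powr n * (1 - t / x) powr (\<mu> - 1))"
      using x by (simp add: powr_add powr_diff field_simps)
  qed simp
qed

lemma sums_integral_dominated:
  fixes f :: "nat \<Rightarrow> 'a::euclidean_space \<Rightarrow> real"
  assumes f: "\<And>n. (f n has_integral I n) S"
    and F: "\<And>t. t \<in> S \<Longrightarrow> (\<lambda>n. f n t) sums F t"
    and k: "k integrable_on S" "\<And>t. t \<in> S \<Longrightarrow> 0 \<le> k t"
    and b: "summable b" "\<And>n. 0 \<le> b n"
    and le: "\<And>n t. t \<in> S \<Longrightarrow> \<bar>f n t\<bar> \<le> k t * b n"
  shows "F integrable_on S" and "I sums integral S F"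
proof -
  define P where "P N t = (\<Sum>n<N. f n t)" for N t
  have P: "(P N has_integral (\<Sum>n<N. I n)) S" for N
    unfolding P_def by (intro has_integral_sum f) simp
  have P_int: "P N integrable_on S" for N
    using P by blast
  have h: "(\<lambda>t. k t * suminf b) integrable_on S"
    using k(1) by (rule integrable_on_mult_left)
  have bound: "norm (P N t) \<le> k t * suminf b" if "t \<in> S" for N t
  proof -
    have "norm (P N t) \<le> (\<Sum>n<N. k t * b n)"
      unfolding P_def using le[OF that] by (intro order_trans[OF norm_sum] sum_mono) auto
    also have "\<dots> \<le> k t * suminf b"
      unfolding sum_distrib_left[symmetric]
      using k(2)[OF that] sum_le_suminf[OF b(1)] b(2) by (intro mult_left_mono) auto
    finally show ?thesis .
  qed
  have lim: "(\<lambda>N. P N t) \<longlonglongrightarrow> F t" if "t \<in> S" for t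
    using F[OF that] unfolding P_def sums_def .
  show "F integrable_on S"
    using dominated_convergence(1)[OF P_int h bound lim] .
  show "I sums integral S F"
    using dominated_convergence(2)[OF P_int h bound lim]
    unfolding sums_def by (simp add: integral_unique[OF P])
qed

text \<open>By \<open>has_integral_powr_diff_cosh\<close>, this is the integral of
  \<open>(x - t) powr (\<mu> - 1) * cosh (\<beta> * t)\<close> over \<open>{0..x}\<close>, i.e. \<open>Gamma \<mu>\<close> times the
  Riemann-Liouville integral of order \<open>\<mu>\<close> of \<open>cosh (\<beta> * _)\<close> at \<open>x\<close>.\<close>
definition cosh_kernel_integral :: "real \<Rightarrow> real \<Rightarrow> real \<Rightarrow> real" where
  "cosh_kernel_integral \<mu> \<beta> x =
     x powr \<mu> / \<mu> * hyp1F2 1 ((\<mu> + 1) / 2) ((\<mu> + 2) / 2) (\<beta>\<^sup>2 * x\<^sup>2 / 4)"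

lemma cosh_kernel_series_term:
  fixes \<mu> x \<beta> :: real
  assumes mu: "0 < \<mu>" and x: "0 < x"
  shows "\<beta> ^ (2 * k) * (x powr (\<mu> + real (2 * k)) * (Gamma \<mu> / Gamma (\<mu> + real (2 * k) + 1)))
       = x powr \<mu> / \<mu> * (pochhammer 1 k / (pochhammer ((\<mu> + 1) / 2) k * pochhammer ((\<mu> + 2) / 2) k)
           * (\<beta>\<^sup>2 * x\<^sup>2 / 4) ^ k / fact k)"
proof -
  have double: "pochhammer (\<mu> + 1) (2 * k) = 4 ^ k * (pochhammer ((\<mu> + 1) / 2) k * pochhammer ((\<mu> + 2) / 2) k)"
  proof -
    have two: "2 * ((\<mu> + 1) / 2) = \<mu> + 1" and shift: "(\<mu> + 1) / 2 + 1 / 2 = (\<mu> + 2) / 2"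
      by (simp_all add: field_simps)
    have four: "of_nat (2 ^ (2 * k)) = (4::real) ^ k"
      by (simp add: power_mult)
    show ?thesis
      using pochhammer_double[of "(\<mu> + 1) / 2" k] unfolding two shift four by (simp add: mult.assoc)
  qed
  have "\<mu> + 1 \<notin> \<int>\<^sub>\<le>\<^sub>0" "\<mu> \<notin> \<int>\<^sub>\<le>\<^sub>0"
    using mu by (auto elim!: nonpos_Ints_cases)
  moreover have Gamma_nz: "Gamma \<mu> \<noteq> 0"
    using mu by (auto simp: Gamma_eq_zero_iff)
  ultimately have "pochhammer (\<mu> + 1) (2 * k) * (\<mu> * Gamma \<mu>) = Gamma (\<mu> + 1 + real (2 * k))"
    using mu by (simp add: pochhammer_Gamma Gamma_plus1)
  then have Gamma_eq: "Gamma (\<mu> + real (2 * k) + 1)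
      = 4 ^ k * (\<mu> * Gamma \<mu>) * (pochhammer ((\<mu> + 1) / 2) k * pochhammer ((\<mu> + 2) / 2) k)"
    using double by (simp add: ac_simps)
  have "0 < pochhammer ((\<mu> + 1) / 2) k * pochhammer ((\<mu> + 2) / 2) k"
    using mu by (simp add: pochhammer_pos)
  moreover have "x powr (\<mu> + real (2 * k)) = x powr \<mu> * x ^ (2 * k)"
    using x powr_realpow[OF x, of "2 * k"] by (simp add: powr_add)
  moreover have "(y\<^sup>2) ^ k = (y ^ k)\<^sup>2" for y :: real
    by (metis power_mult mult.commute)
  ultimately show ?thesis
    using mu Gamma_nz unfolding Gamma_eq
    by (simp add: pochhammer_fact[symmetric] field_simps power_mult)
qed

lemma has_integral_powr_diff_cosh:
  fixes \<mu> \<beta> x :: real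
  assumes mu: "0 < \<mu>" and x: "0 < x"
  shows "((\<lambda>t. (x - t) powr (\<mu> - 1) * cosh (\<beta> * t)) has_integral cosh_kernel_integral \<mu> \<beta> x) {0..x}"
proof -
  define e where "e n t = (if even n then (\<beta> * t) ^ n / fact n else 0)" for n and t :: real
  define c where "c n = (if even n then \<beta> ^ n * (x powr (\<mu> + n) * (Gamma \<mu> / Gamma (\<mu> + n + 1))) else 0)" for n
  define I where "I = integral {0..x} (\<lambda>t. (x - t) powr (\<mu> - 1) * cosh (\<beta> * t))"
  have terms: "((\<lambda>t. (x - t) powr (\<mu> - 1) * e n t) has_integral c n) {0..x}" for n
    using has_integral_mult_right[OF has_integral_powr_diff_mult_power[OF mu x, of n], of "\<beta> ^ n / fact n"]
    by (simp add: e_def c_def field_simps)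
  have cosh_sums: "(\<lambda>n. (x - t) powr (\<mu> - 1) * e n t) sums ((x - t) powr (\<mu> - 1) * cosh (\<beta> * t))" for t
  proof -
    have "(\<lambda>n. e n t) sums cosh (\<beta> * t)"
      using cosh_converges[of "\<beta> * t"] by (simp add: e_def divide_inverse mult.commute cong: if_cong)
    then show ?thesis by (rule sums_mult)
  qed
  have kernel: "(\<lambda>t. (x - t) powr (\<mu> - 1)) integrable_on {0..x}"
    using has_integral_powr_diff_mult_power[OF mu x, of 0] by auto
  have bound: "\<bar>(x - t) powr (\<mu> - 1) * e n t\<bar> \<le> (x - t) powr (\<mu> - 1) * ((\<bar>\<beta>\<bar> * x) ^ n / fact n)"
    if "t \<in> {0..x}" for n t
  proof -
    have "\<bar>e n t\<bar> \<le> (\<bar>\<beta>\<bar> * x) ^ n / fact n"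
      using that by (auto simp: e_def abs_mult power_abs intro!: divide_right_mono power_mono mult_left_mono)
    from mult_left_mono[OF this, of "(x - t) powr (\<mu> - 1)"] show ?thesis
      by (simp add: abs_mult)
  qed
  have "summable (\<lambda>n. (\<bar>\<beta>\<bar> * x) ^ n / fact n)"
    using summable_exp[of "\<bar>\<beta>\<bar> * x"] by (simp add: divide_inverse mult.commute)
  from sums_integral_dominated[OF terms cosh_sums kernel _ this _ bound]
  have integrable: "(\<lambda>t. (x - t) powr (\<mu> - 1) * cosh (\<beta> * t)) integrable_on {0..x}"
    and "c sums I"
    using x unfolding I_def by auto
  then have "(\<lambda>k. c (2 * k)) sums I"
    by (subst sums_mono_reindex[of "\<lambda>k. 2 * k"]) (auto simp: strict_mono_def c_def elim!: evenE)
  moreover have "c (2 * k) = x powr \<mu> / \<mu> * (pochhammer 1 k / (pochhammer ((\<mu> + 1) / 2) k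
      * pochhammer ((\<mu> + 2) / 2) k) * (\<beta>\<^sup>2 * x\<^sup>2 / 4) ^ k / fact k)" for k
    using cosh_kernel_series_term[OF mu x, of \<beta> k] by (simp add: c_def)
  ultimately have "(\<lambda>k. x powr \<mu> / \<mu> * (pochhammer 1 k / (pochhammer ((\<mu> + 1) / 2) k
      * pochhammer ((\<mu> + 2) / 2) k) * (\<beta>\<^sup>2 * x\<^sup>2 / 4) ^ k / fact k)) sums I"
    by simp
  from sums_mult_D[OF this] have "I = cosh_kernel_integral \<mu> \<beta> x"
    using mu x unfolding cosh_kernel_integral_def hyp1F2_def by (simp add: sums_unique[symmetric])
  with integrable show ?thesis unfolding I_def by (simp add: has_integral_integral)
qed

lemma has_integral_powr_diff_sinh:
  fixes \<nu> \<beta> x :: real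
  assumes nu: "0 < \<nu>" and x: "0 < x"
  shows "((\<lambda>t. (x - t) powr (\<nu> - 1) * sinh (\<beta> * t)) has_integral
           \<beta> / \<nu> * cosh_kernel_integral (\<nu> + 1) \<beta> x) {0..x}"
proof -
  define \<Phi> where "\<Phi> t = (x - t) powr \<nu> * sinh (\<beta> * t)" for t
  define \<Phi>' where "\<Phi>' t = (x - t) powr \<nu> * (\<beta> * cosh (\<beta> * t)) - \<nu> * ((x - t) powr (\<nu> - 1) * sinh (\<beta> * t))" for t
  have "continuous_on {0..x} \<Phi>"
    unfolding \<Phi>_def using nu by (intro continuous_intros continuous_on_powr') auto
  moreover have "(\<Phi> has_vector_derivative \<Phi>' t) (at t)" if "t \<in> {0<..<x}" for t
  proof -
    have "((\<lambda>t. (x - t) powr \<nu>) has_real_derivative \<nu> * (x - t) powr (\<nu> - 1) * -1) (at t)"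
      using that by (intro DERIV_fun_powr derivative_eq_intros) auto
    moreover have "((\<lambda>t. sinh (\<beta> * t)) has_real_derivative cosh (\<beta> * t) * \<beta>) (at t)"
      by (auto intro!: derivative_eq_intros)
    ultimately show ?thesis
      unfolding has_real_derivative_iff_has_vector_derivative[symmetric] \<Phi>_def
      by (rule DERIV_cong[OF DERIV_mult]) (simp add: \<Phi>'_def algebra_simps)
  qed
  ultimately have "(\<Phi>' has_integral \<Phi> x - \<Phi> 0) {0..x}"
    using x by (intro fundamental_theorem_of_calculus_interior) auto
  then have by_parts: "(\<Phi>' has_integral 0) {0..x}"
    using nu by (simp add: \<Phi>_def)
  have "((\<lambda>t. (x - t) powr \<nu> * (\<beta> * cosh (\<beta> * t))) has_integral \<beta> * cosh_kernel_integral (\<nu> + 1) \<beta> x) {0..x}"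
    using has_integral_mult_right[OF has_integral_powr_diff_cosh[of "\<nu> + 1" x \<beta>], of \<beta>] nu x
    by (simp add: mult_ac)
  from has_integral_mult_right[OF has_integral_diff[OF this by_parts], of "1 / \<nu>"]
  show ?thesis
    using nu by (simp add: \<Phi>'_def field_simps)
qed

lemma powr_neg_mult_sinh_power_deriv:
  fixes \<alpha> \<beta> t x :: real
  assumes "t < x"
  shows "(x - t) powr (- \<alpha>) * (\<beta> * cosh (\<beta> * t) * (t - x) ^ m + sinh (\<beta> * t) * (m * (t - x) ^ (m - 1)))
       = (-1) ^ m * (\<beta> * ((x - t) powr (m - \<alpha>) * cosh (\<beta> * t))
           - m * ((x - t) powr (m - \<alpha> - 1) * sinh (\<beta> * t)))"
proof -
  have y: "0 < x - t" using assms by simp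
  have p1: "(x - t) powr (- \<alpha>) * (m * (t - x) ^ (m - 1)) = - ((-1) ^ m * (m * (x - t) powr (m - \<alpha> - 1)))"
  proof (cases m)
    case (Suc n)
    then show ?thesis
      using powr_neg_mult_power_minus[OF y, of \<alpha> n] by simp
  qed simp
  have p0: "(x - t) powr (- \<alpha>) * (t - x) ^ m = (-1) ^ m * (x - t) powr (m - \<alpha>)"
    using powr_neg_mult_power_minus[OF y, of \<alpha> m] by simp
  have "(x - t) powr (- \<alpha>) * (\<beta> * cosh (\<beta> * t) * (t - x) ^ m + sinh (\<beta> * t) * (m * (t - x) ^ (m - 1)))
      = \<beta> * cosh (\<beta> * t) * ((x - t) powr (- \<alpha>) * (t - x) ^ m)
        + sinh (\<beta> * t) * ((x - t) powr (- \<alpha>) * (m * (t - x) ^ (m - 1)))"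
    by (simp add: algebra_simps)
  also have "\<dots> = (-1) ^ m * (\<beta> * ((x - t) powr (m - \<alpha>) * cosh (\<beta> * t))
      - m * ((x - t) powr (m - \<alpha> - 1) * sinh (\<beta> * t)))"
    unfolding p0 p1 by (simp add: algebra_simps)
  finally show ?thesis .
qed

lemma abs_sinh_power_deriv_le:
  fixes \<beta> t x :: real
  assumes "t \<in> {0..x}"
  shows "\<bar>\<beta> * cosh (\<beta> * t) * (t - x) ^ n + sinh (\<beta> * t) * (n * (t - x) ^ (n - 1))\<bar>
       \<le> cosh (\<beta> * x) * (\<bar>\<beta>\<bar> * x ^ n + n * x ^ (n - 1))"
proof -
  have "\<bar>t - x\<bar> \<le> x" using assms by auto
  then have pow: "\<bar>t - x\<bar> ^ n \<le> x ^ n" "\<bar>t - x\<bar> ^ (n - 1) \<le> x ^ (n - 1)"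
    by (simp_all add: power_mono)
  have "\<bar>\<beta> * t\<bar> \<le> \<bar>\<beta> * x\<bar>"
    using assms by (simp add: abs_mult mult_left_mono)
  then have cosh: "cosh (\<beta> * t) \<le> cosh (\<beta> * x)" "\<bar>sinh (\<beta> * t)\<bar> \<le> cosh (\<beta> * x)"
    using cosh_real_le_if_abs_le abs_sinh_le_cosh_real order_trans by blast+
  have "\<bar>\<beta> * cosh (\<beta> * t) * (t - x) ^ n + sinh (\<beta> * t) * (n * (t - x) ^ (n - 1))\<bar>
      \<le> \<bar>\<beta>\<bar> * (cosh (\<beta> * t) * \<bar>t - x\<bar> ^ n) + n * (\<bar>sinh (\<beta> * t)\<bar> * \<bar>t - x\<bar> ^ (n - 1))"
    by (rule order_trans[OF abs_triangle_ineq]) (simp add: abs_mult power_abs mult_ac)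
  also have "\<dots> \<le> \<bar>\<beta>\<bar> * (cosh (\<beta> * x) * x ^ n) + n * (cosh (\<beta> * x) * x ^ (n - 1))"
    using cosh pow by (intro add_mono mult_left_mono mult_mono) auto
  also have "\<dots> = cosh (\<beta> * x) * (\<bar>\<beta>\<bar> * x ^ n + n * x ^ (n - 1))"
    by (simp add: algebra_simps)
  finally show ?thesis .
qed

text \<open>The integrand is \<open>(x - t) powr (- \<alpha>)\<close> times the derivative of \<open>sinh (\<beta> * t) * (t - x) ^ m\<close>,
  so integration by parts reduces it to the cosh kernel integral.\<close>
lemma has_integral_powr_diff_sinh_power_deriv:
  fixes \<alpha> \<beta> x :: real
  assumes a0: "0 < \<alpha>" and a1: "\<alpha> < 1" and x: "0 < x"
  shows "((\<lambda>t. (x - t) powr (- \<alpha>) * (\<beta> * cosh (\<beta> * t) * (t - x) ^ m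
              + sinh (\<beta> * t) * (m * (t - x) ^ (m - 1)))) has_integral
          (-1) ^ m * (\<alpha> / (\<alpha> - m)) * \<beta> * cosh_kernel_integral (real m + 1 - \<alpha>) \<beta> x) {0..x}"
proof -
  define K where "K = cosh_kernel_integral (real m + 1 - \<alpha>) \<beta> x"
  have cosh_part: "((\<lambda>t. (x - t) powr (m - \<alpha>) * cosh (\<beta> * t)) has_integral K) {0..x}"
    using has_integral_powr_diff_cosh[of "real m + 1 - \<alpha>" x \<beta>] a1 x by (simp add: K_def)
  have sinh_part: "((\<lambda>t. m * ((x - t) powr (m - \<alpha> - 1) * sinh (\<beta> * t))) has_integral m * (\<beta> / (m - \<alpha>) * K)) {0..x}"
  proof (cases "m = 0")
    case False
    then have "0 < m - \<alpha>" using a1 by linarith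
    moreover have "real m - \<alpha> + 1 = real m + 1 - \<alpha>" by simp
    ultimately show ?thesis
      using has_integral_mult_right[OF has_integral_powr_diff_sinh[OF _ x, where \<beta> = \<beta>], of "m - \<alpha>" m]
      by (simp only: K_def)
  qed simp
  have "((\<lambda>t. (-1) ^ m * (\<beta> * ((x - t) powr (m - \<alpha>) * cosh (\<beta> * t))
        - m * ((x - t) powr (m - \<alpha> - 1) * sinh (\<beta> * t))))
      has_integral (-1) ^ m * (\<alpha> / (\<alpha> - m)) * \<beta> * K) {0..x}"
  proof -
    have "\<alpha> - m \<noteq> 0" using a0 a1 by (cases m) auto
    then have "(-1) ^ m * (\<beta> * K - m * (\<beta> / (m - \<alpha>) * K)) = (-1) ^ m * (\<alpha> / (\<alpha> - m)) * \<beta> * K"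
      by (simp add: field_simps)
    moreover have "((\<lambda>t. (-1) ^ m * (\<beta> * ((x - t) powr (m - \<alpha>) * cosh (\<beta> * t))
        - m * ((x - t) powr (m - \<alpha> - 1) * sinh (\<beta> * t))))
      has_integral (-1) ^ m * (\<beta> * K - m * (\<beta> / (m - \<alpha>) * K))) {0..x}"
      by (intro has_integral_mult_right has_integral_diff cosh_part sinh_part)
    ultimately show ?thesis by simp
  qed
  then show ?thesis
    unfolding K_def
  proof (rule has_integral_spike_finite[of "{x}", rotated 2])
    fix t assume "t \<in> {0..x} - {x}"
    then show "(x - t) powr (- \<alpha>) * (\<beta> * cosh (\<beta> * t) * (t - x) ^ m + sinh (\<beta> * t) * (m * (t - x) ^ (m - 1)))
        = (-1) ^ m * (\<beta> * ((x - t) powr (m - \<alpha>) * cosh (\<beta> * t)) - m * ((x - t) powr (m - \<alpha> - 1) * sinh (\<beta> * t)))"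
      by (intro powr_neg_mult_sinh_power_deriv) auto
  qed simp
qed

lemma tanh_series_coefficient:
  fixes \<alpha> \<beta> x D :: real
  assumes \<alpha>: "\<alpha> \<notin> \<int>"
  shows "gen_binom \<alpha> l * D * (\<beta> * x powr (1 - \<alpha> + real l) / Gamma (2 + real l - \<alpha>))
            * hyp1F2 1 ((2 + real l - \<alpha>) / 2) ((3 + real l - \<alpha>) / 2) (\<beta>\<^sup>2 * x\<^sup>2 / 4)
       = D / fact l * ((-1) ^ l * (\<alpha> / (\<alpha> - l)) * \<beta> * cosh_kernel_integral (real l + 1 - \<alpha>) \<beta> x)
           / Gamma (1 - \<alpha>)"
proof -
  have alg: "G * D * (b * X / \<Gamma>\<^sub>2) * H = D / f * (q * b * (X / \<mu> * H)) / \<Gamma>\<^sub>1"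
    if "G * f / \<Gamma>\<^sub>2 * \<mu> = q / \<Gamma>\<^sub>1" "f \<noteq> 0" "\<mu> \<noteq> 0"
    for G D b X \<Gamma>\<^sub>1 \<Gamma>\<^sub>2 H f q \<mu> :: real
  proof -
    have "D / f * (q * b * (X / \<mu> * H)) / \<Gamma>\<^sub>1 = D / f * b * X * H / \<mu> * (q / \<Gamma>\<^sub>1)"
      by simp
    then show ?thesis
      unfolding that(1)[symmetric] using that(2,3) by (simp add: field_simps)
  qed
  have args: "1 - \<alpha> + real l = real l + 1 - \<alpha>" "(2 + real l - \<alpha>) / 2 = (real l + 1 - \<alpha> + 1) / 2"
    "(3 + real l - \<alpha>) / 2 = (real l + 1 - \<alpha> + 2) / 2"
    by simp_all
  have "real l + 1 - \<alpha> \<noteq> 0"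
    using not_Ints_add_Ints(2)[OF \<alpha>, of "l + 1"] by auto
  moreover from this have "gen_binom \<alpha> l * fact l / Gamma (2 + real l - \<alpha>) * (real l + 1 - \<alpha>)
      = (-1) ^ l * (\<alpha> / (\<alpha> - l)) / Gamma (1 - \<alpha>)"
    unfolding gen_binom_mult_fact_div_Gamma[OF \<alpha>] by simp
  ultimately show ?thesis
    unfolding cosh_kernel_integral_def args by (intro alg) simp_all
qed

lemma caputo_integral_tanh_sums:
  fixes \<alpha> \<beta> x :: real
  assumes a0: "0 < \<alpha>" and a1: "\<alpha> < 1" and x: "0 < x" and \<beta>: "\<beta> \<noteq> 0"
  defines "a \<equiv> \<lambda>n. (deriv ^^ n) (\<lambda>y. 1 / cosh (\<beta> * y)) x / fact n"
  shows "(\<lambda>n. a n * ((-1) ^ n * (\<alpha> / (\<alpha> - n)) * \<beta> * cosh_kernel_integral (real n + 1 - \<alpha>) \<beta> x))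
           sums integral {0..x} (\<lambda>t. (x - t) powr (- \<alpha>) * deriv (\<lambda>y. tanh (\<beta> * y)) t)"
proof -
  define u where "u n t = \<beta> * cosh (\<beta> * t) * (t - x) ^ n + sinh (\<beta> * t) * (n * (t - x) ^ (n - 1))" for n t
  have taylor:
    "\<And>t. \<bar>t - x\<bar> \<le> \<bar>x\<bar> \<Longrightarrow> (\<lambda>n. a n * (t - x) ^ n) sums (1 / cosh (\<beta> * t))"
    "\<And>t. \<bar>t - x\<bar> \<le> \<bar>x\<bar> \<Longrightarrow> (\<lambda>n. a n * (n * (t - x) ^ (n - 1))) sums deriv (\<lambda>y. 1 / cosh (\<beta> * y)) t"
    "summable (\<lambda>n. \<bar>a n\<bar> * x ^ n)"
    "summable (\<lambda>n. \<bar>a n\<bar> * (n * x ^ (n - 1)))"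
    using sech_taylor_series[OF \<beta>, of _ x] sech_taylor_series(3,4)[OF \<beta>, of 0 x] x
    unfolding a_def by simp_all
  have terms: "((\<lambda>t. a n * ((x - t) powr (- \<alpha>) * u n t)) has_integral
      a n * ((-1) ^ n * (\<alpha> / (\<alpha> - n)) * \<beta> * cosh_kernel_integral (real n + 1 - \<alpha>) \<beta> x)) {0..x}" for n
    unfolding u_def by (rule has_integral_mult_right[OF has_integral_powr_diff_sinh_power_deriv[OF a0 a1 x]])
  have pointwise: "(\<lambda>n. a n * ((x - t) powr (- \<alpha>) * u n t))
      sums ((x - t) powr (- \<alpha>) * deriv (\<lambda>y. tanh (\<beta> * y)) t)" if "t \<in> {0..x}" for t
  proof -
    have "\<bar>t - x\<bar> \<le> \<bar>x\<bar>" using that by auto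
    from sums_add[OF sums_mult[OF taylor(1)[OF this], of "\<beta> * cosh (\<beta> * t)"]
        sums_mult[OF taylor(2)[OF this], of "sinh (\<beta> * t)"]]
    have "(\<lambda>n. a n * u n t) sums deriv (\<lambda>y. tanh (\<beta> * y)) t"
      unfolding deriv_tanh_mult u_def by (simp add: algebra_simps)
    from sums_mult[OF this, of "(x - t) powr (- \<alpha>)"] show ?thesis
      by (simp add: mult_ac)
  qed
  have kernel: "(\<lambda>t. (x - t) powr (- \<alpha>)) integrable_on {0..x}"
    using has_integral_powr_diff_mult_power[of "1 - \<alpha>" x 0] a1 x by auto
  define b where "b n = cosh (\<beta> * x) * (\<bar>\<beta>\<bar> * (\<bar>a n\<bar> * x ^ n) + \<bar>a n\<bar> * (n * x ^ (n - 1)))" for n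
  have "summable b"
    unfolding b_def using taylor(3,4) by (intro summable_mult summable_add)
  moreover have "0 \<le> b n" for n
    unfolding b_def using x by simp
  moreover have "\<bar>a n * ((x - t) powr (- \<alpha>) * u n t)\<bar> \<le> (x - t) powr (- \<alpha>) * b n"
    if "t \<in> {0..x}" for n t
  proof -
    have "\<bar>a n\<bar> * (x - t) powr (- \<alpha>) * \<bar>u n t\<bar>
        \<le> \<bar>a n\<bar> * (x - t) powr (- \<alpha>) * (cosh (\<beta> * x) * (\<bar>\<beta>\<bar> * x ^ n + n * x ^ (n - 1)))"
      unfolding u_def by (intro mult_left_mono abs_sinh_power_deriv_le that) simp
    then show ?thesis
      unfolding b_def by (simp add: abs_mult algebra_simps)
  qed
  ultimately show ?thesis
    using sums_integral_dominated(2)[OF terms pointwise kernel] by simp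
qed

theorem mainTheorem4:
  fixes \<alpha> \<beta> x :: real
  assumes "0 < \<alpha>" and "\<alpha> < 1" and "0 < x"
  shows "(\<lambda>l. gen_binom \<alpha> l * (deriv ^^ l) (\<lambda>y. 1 / cosh (\<beta> * y)) x
            * (\<beta> * x powr (1 - \<alpha> + real l) / Gamma (2 + real l - \<alpha>))
            * hyp1F2 1 ((2 + real l - \<alpha>) / 2) ((3 + real l - \<alpha>) / 2) (\<beta>\<^sup>2 * x\<^sup>2 / 4))
         sums caputo \<alpha> (\<lambda>y. tanh (\<beta> * y)) x"
proof (cases "\<beta> = 0")
  case True
  then show ?thesis by (simp add: caputo_def)
next
  case False
  have "\<alpha> \<notin> \<int>"
    using assms by (auto elim!: Ints_cases)
  note coefficient = tanh_series_coefficient[OF this]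
  from sums_divide[OF caputo_integral_tanh_sums[OF assms False], of "Gamma (1 - \<alpha>)"]
  show ?thesis
    unfolding caputo_def coefficient by simp
qed

end
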